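(* Consider a two-user ($N=2$) multi-hop decode-and-forward relay network with $L\ge 2$ hops and a fixed relay assignment, with powers, SINRs and sum-rate as defined in the context. Then there exists a power allocation $\mathbf{P}^*=(P_{i,l}^* )_{i\in\{1,2\},\,l\in\{0,\dots,L-1\}}\in[0,P]^{2L}$ that maximizes the sum-rate $R(\mathbf{P})=\sum_{i=1}^{2}\log_2\!\big(1+\min_{l\in\{1,\dots,L\}}\gamma_{i,l}(\mathbf{P})\big)$ over $[0,P]^{2L}$ and satisfies, for each user $i\in\{1,2\}$, $\gamma_{i,1}(\mathbf{P}^* )=\gamma_{i,2}(\mathbf{P}^* )=\cdots=\gamma_{i,L}(\mathbf{P}^* )$; i.e., the SINRs of each user are equal in all hops.
   Context: Setup: there are two source–destination (S-D) pairs (users) $i\in\{1,2\}$, whose information travels over $L$ hops. For a fixed relay assignment, user $i$ uses a path of nodes $r_{i,0},r_{i,1},\dots,r_{i,L}$ (source $r_{i,0}$, destination $r_{i,L}$, distinct relays of the two users in each intermediate hop). In hop $l\in\{1,\dots,L\}$ the two transmitting nodes $r_{1,l-1},r_{2,l-1}$ transmit simultaneously with powers $P_{1,l-1},P_{2,l-1}\in[0,P]$, where $P>0$ is the maximum transmit power. Let $g_{j,i,l}=|h[r_{j,l-1},r_{i,l},l]|^2>0$ denote the channel power gain from the transmitter of user $j$ to the receiver of user $i$ in hop $l$, and let $\sigma^2>0$ be the noise variance. The SINR of user $i$ in hop $l$ (interference treated as noise, $j\neq i$ the other user) is $\gamma_{i,l}(\mathbf{P})=\dfrac{P_{i,l-1}\,g_{i,i,l}}{\sigma^2+P_{j,l-1}\,g_{j,i,l}}$.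 The end-to-end SINR of user $i$ is $\min_{l\in\{1,\dots,L\}}\gamma_{i,l}$ and the sum-rate is $R(\mathbf{P})=\sum_{i=1}^{2}\log_2(1+\min_{l}\gamma_{i,l}(\mathbf{P}))$. *)

theory Defs
  imports "HOL-Analysis.Analysis"
begin

text \<open>Hops l range over {1..L}; transmit powers are indexed Pw i (l-1), l-1 in {0..L-1}.
  g j i l is the channel power gain from the transmitter of user j to the receiver
  of user i in hop l (for the fixed relay assignment).\<close>

definition other :: "nat \<Rightarrow> nat" where
  "other i = 3 - i"

definition sinr :: "(nat \<Rightarrow> nat \<Rightarrow> nat \<Rightarrow> real) \<Rightarrow> real \<Rightarrow> (nat \<Rightarrow> nat \<Rightarrow> real) \<Rightarrow> nat \<Rightarrow> nat \<Rightarrow> real" where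
  "sinr g \<sigma>2 Pw i l =
     Pw i (l - 1) * g i i l / (\<sigma>2 + Pw (other i) (l - 1) * g (other i) i l)"

definition e2e_sinr :: "nat \<Rightarrow> (nat \<Rightarrow> nat \<Rightarrow> nat \<Rightarrow> real) \<Rightarrow> real \<Rightarrow> (nat \<Rightarrow> nat \<Rightarrow> real) \<Rightarrow> nat \<Rightarrow> real" where
  "e2e_sinr L g \<sigma>2 Pw i = Min ((\<lambda>l. sinr g \<sigma>2 Pw i l) ` {1..L})"

definition sum_rate :: "nat \<Rightarrow> (nat \<Rightarrow> nat \<Rightarrow> nat \<Rightarrow> real) \<Rightarrow> real \<Rightarrow> (nat \<Rightarrow> nat \<Rightarrow> real) \<Rightarrow> real" where
  "sum_rate L g \<sigma>2 Pw = (\<Sum>i\<in>{1,2}. log 2 (1 + e2e_sinr L g \<sigma>2 Pw i))"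

text \<open>Entries outside this index range are irrelevant; we fix them to 0 so the
  feasible set corresponds exactly to [0,P]^{2L}.\<close>

definition feasible :: "nat \<Rightarrow> real \<Rightarrow> (nat \<Rightarrow> nat \<Rightarrow> real) \<Rightarrow> bool" where
  "feasible L Pmax Pw \<longleftrightarrow>
     (\<forall>i\<in>{1,2}. \<forall>l<L. 0 \<le> Pw i l \<and> Pw i l \<le> Pmax) \<and>
     (\<forall>i l. (i \<notin> {1,2} \<or> l \<ge> L) \<longrightarrow> Pw i l = 0)"

end

theory Submission imports Defs begin

text \<open>The feasible set [0,P]^{2L} is compact and the sum-rate is continuous on
  it, so a maximiser exists. Given any allocation, let t_i be the end-to-end SINR of user i,
  so that every hop achieves at least (t_1, t_2). In each hop the two transmit powers can then
  be lowered so that the hop achieves exactly (t_1, t_2): this is a 2x2 linear system whose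
  solution is bounded by the original powers. The new allocation has the same end-to-end SINRs,
  hence the same sum-rate, and equal SINRs in all hops.\<close>

lemma compact_PiE_UNIV:
  fixes S :: "'i \<Rightarrow> 'b::topological_space set"
  assumes "\<And>i. compact (S i)"
  shows "compact (PiE UNIV S)"
proof -
  have "compactin (product_topology (\<lambda>i. euclidean) UNIV) (PiE UNIV S)"
    using assms by (simp add: compactin_PiE)
  then show ?thesis by (simp add: euclidean_product_topology)
qed

lemma continuous_on_Min_image:
  fixes f :: "'i \<Rightarrow> 'a::topological_space \<Rightarrow> 'b::linorder_topology"
  assumes "finite A" "A \<noteq> {}" "\<And>l. l \<in> A \<Longrightarrow> continuous_on S (f l)"
  shows "continuous_on S (\<lambda>x. Min ((\<lambda>l. f l x) ` A))"
  using assms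
proof (induction A rule: finite_ne_induct)
  case (singleton a)
  then show ?case by simp
next
  case (insert a B)
  then have "continuous_on S (\<lambda>x. min (f a x) (Min ((\<lambda>l. f l x) ` B)))"
    by (intro continuous_on_min) auto
  with insert show ?case by simp
qed

lemma continuous_on_coordinate2: "continuous_on S (\<lambda>x::'a \<Rightarrow> 'b \<Rightarrow> real. x i m)"
  using continuous_on_product_then_coordinatewise[OF continuous_on_id, of S i]
  by (rule continuous_on_product_then_coordinatewise)

text \<open>One hop seen as two interfering links: direct gains a, c, cross gains b, d, noise s.
  The powers p1, p2 below solve the linear system p1 a = t1 (s + p2 b), p2 c = t2 (s + p1 d).\<close>

lemma two_link_sinr_solution:
  fixes a b c d s t1 t2 D :: real
  assumes "s > 0" "a > 0" "c > 0" "t1 \<ge> 0" "t2 \<ge> 0" "b \<ge> 0" "d \<ge> 0"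
    and D: "D = a * c - t1 * t2 * b * d" "D > 0"
  defines "p1 \<equiv> t1 * s * (c + t2 * b) / D" and "p2 \<equiv> t2 * s * (a + t1 * d) / D"
  shows "p1 * a / (s + p2 * b) = t1" and "p2 * c / (s + p1 * d) = t2"
proof -
  have "s * D + t2 * s * (a + t1 * d) * b = s * a * (c + t2 * b)"
    "s * D + t1 * s * (c + t2 * b) * d = s * c * (a + t1 * d)"
    unfolding D(1) by (simp_all add: algebra_simps)
  then have den1: "s + p2 * b = s * a * (c + t2 * b) / D"
    and den2: "s + p1 * d = s * c * (a + t1 * d) / D"
    using D(2) by (simp_all add: p1_def p2_def field_simps)
  have pos: "s * a * (c + t2 * b) / D > 0" "s * c * (a + t1 * d) / D > 0"
    using assms by (simp_all add: add_pos_nonneg)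
  have "p1 * a = t1 * (s * a * (c + t2 * b) / D)" "p2 * c = t2 * (s * c * (a + t1 * d) / D)"
    by (simp_all add: p1_def p2_def)
  then show "p1 * a / (s + p2 * b) = t1" and "p2 * c / (s + p1 * d) = t2"
    unfolding den1 den2 using pos by (metis less_irrefl nonzero_mult_div_cancel_right)+
qed

lemma two_link_sinr_targets_attainable:
  fixes a b c d s t1 t2 q1 q2 :: real
  assumes pos: "a > 0" "b > 0" "c > 0" "d > 0" "s > 0"
    and nonneg: "t1 \<ge> 0" "t2 \<ge> 0" "q1 \<ge> 0" "q2 \<ge> 0"
    and le1: "t1 \<le> q1 * a / (s + q2 * b)" and le2: "t2 \<le> q2 * c / (s + q1 * d)"
  shows "\<exists>p1 p2. 0 \<le> p1 \<and> p1 \<le> q1 \<and> 0 \<le> p2 \<and> p2 \<le> q2 \<and>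
           p1 * a / (s + p2 * b) = t1 \<and> p2 * c / (s + p1 * d) = t2"
proof -
  define D where "D = a * c - t1 * t2 * b * d"
  have h1: "t1 * (s + q2 * b) \<le> q1 * a"
    using le1 pos nonneg by (simp add: le_divide_eq add_pos_nonneg)
  have h2: "t2 * (s + q1 * d) \<le> q2 * c"
    using le2 pos nonneg by (simp add: le_divide_eq add_pos_nonneg)
  \<comment> \<open>eliminate q2 (resp. q1) between h1 and h2\<close>
  have k1: "t1 * s * (c + t2 * b) \<le> q1 * D"
  proof -
    have "t1 * b * (t2 * (s + q1 * d)) \<le> t1 * b * (q2 * c)"
      using h2 nonneg pos by (intro mult_left_mono) auto
    moreover have "c * (t1 * (s + q2 * b)) \<le> c * (q1 * a)"
      using h1 pos by (intro mult_left_mono) auto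
    ultimately show ?thesis unfolding D_def by (simp add: algebra_simps)
  qed
  have k2: "t2 * s * (a + t1 * d) \<le> q2 * D"
  proof -
    have "t2 * d * (t1 * (s + q2 * b)) \<le> t2 * d * (q1 * a)"
      using h1 nonneg pos by (intro mult_left_mono) auto
    moreover have "a * (t2 * (s + q1 * d)) \<le> a * (q2 * c)"
      using h2 pos by (intro mult_left_mono) auto
    ultimately show ?thesis unfolding D_def by (simp add: algebra_simps)
  qed
  have D_pos: "D > 0"
  proof (cases "t1 = 0 \<or> t2 = 0")
    case True
    then show ?thesis using pos unfolding D_def by auto
  next
    case False
    then have "t1 * s * (c + t2 * b) > 0"
      using pos nonneg by (intro mult_pos_pos add_pos_pos) auto
    with k1 have "q1 * D > 0" by linarith
    then show ?thesis using nonneg by (simp add: zero_less_mult_iff)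
  qed
  define p1 where "p1 = t1 * s * (c + t2 * b) / D"
  define p2 where "p2 = t2 * s * (a + t1 * d) / D"
  have "p1 * a / (s + p2 * b) = t1" "p2 * c / (s + p1 * d) = t2"
    using two_link_sinr_solution[OF _ _ _ _ _ _ _ D_def D_pos] pos nonneg
    by (simp_all add: p1_def p2_def)
  moreover have "0 \<le> p1" "0 \<le> p2"
    using D_pos pos nonneg by (simp_all add: p1_def p2_def)
  moreover have "p1 \<le> q1" "p2 \<le> q2"
    using D_pos k1 k2 by (simp_all add: p1_def p2_def divide_le_eq)
  ultimately show ?thesis by blast
qed

lemma other_simps [simp]: "other 1 = 2" "other 2 = 1" "other (Suc 0) = 2"
  by (simp_all add: other_def)

lemma feasible_nonneg: "feasible L Pmax Pw \<Longrightarrow> 0 \<le> Pw i l"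
  unfolding feasible_def by (cases "i \<in> {1,2} \<and> l < L") auto

lemma feasible_le: "feasible L Pmax Pw \<Longrightarrow> 0 \<le> Pmax \<Longrightarrow> Pw i l \<le> Pmax"
  unfolding feasible_def by (cases "i \<in> {1,2} \<and> l < L") auto

definition power_box :: "nat \<Rightarrow> real \<Rightarrow> nat \<Rightarrow> nat \<Rightarrow> real set" where
  "power_box L Pmax i l = (if i \<in> {1,2} \<and> l < L then {0..Pmax} else {0})"

lemma feasible_iff_power_box: "feasible L Pmax Pw \<longleftrightarrow> (\<forall>i l. Pw i l \<in> power_box L Pmax i l)"
proof
  assume box: "\<forall>i l. Pw i l \<in> power_box L Pmax i l"
  show "feasible L Pmax Pw"
    unfolding feasible_def
  proof (intro conjI ballI allI impI)
    fix i l :: nat assume "i \<in> {1,2}" "l < L"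
    then show "0 \<le> Pw i l" "Pw i l \<le> Pmax"
      using box[rule_format, of i l] unfolding power_box_def by auto
  next
    fix i l :: nat assume "i \<notin> {1,2} \<or> L \<le> l"
    then show "Pw i l = 0"
      using box[rule_format, of i l] unfolding power_box_def by auto
  qed
qed (auto simp: feasible_def power_box_def)

lemma feasible_eq_PiE: "{Pw. feasible L Pmax Pw} = PiE UNIV (\<lambda>i. PiE UNIV (power_box L Pmax i))"
  by (auto simp: feasible_iff_power_box PiE_UNIV_domain Pi_iff)

lemma compact_feasible: "compact {Pw. feasible L Pmax Pw}"
  unfolding feasible_eq_PiE by (intro compact_PiE_UNIV) (simp add: power_box_def)

lemma e2e_sinr_eq_const:
  assumes "L \<ge> 1" "\<And>l. l \<in> {1..L} \<Longrightarrow> sinr g \<sigma>2 Pw i l = t"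
  shows "e2e_sinr L g \<sigma>2 Pw i = t"
proof -
  have "(\<lambda>l. sinr g \<sigma>2 Pw i l) ` {1..L} = {t}"
    using assms by (auto intro: image_eqI[of _ _ 1])
  then show ?thesis unfolding e2e_sinr_def by simp
qed

lemma sum_rate_eq: "sum_rate L g \<sigma>2 Pw =
    log 2 (1 + e2e_sinr L g \<sigma>2 Pw 1) + log 2 (1 + e2e_sinr L g \<sigma>2 Pw 2)"
  by (simp add: sum_rate_def)

locale two_user_relay =
  fixes L :: nat and Pmax \<sigma>2 :: real and g :: "nat \<Rightarrow> nat \<Rightarrow> nat \<Rightarrow> real"
  assumes hops: "L \<ge> 1" and Pmax_nonneg: "0 \<le> Pmax" and noise_pos: "\<sigma>2 > 0"
    and gain_pos: "\<And>j i l. j \<in> {1,2} \<Longrightarrow> i \<in> {1,2} \<Longrightarrow> l \<in> {1..L} \<Longrightarrow> g j i l > 0"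
begin

abbreviation "feasible_set \<equiv> {Pw. feasible L Pmax Pw}"

lemma sinr_denominator_pos:
  assumes "feasible L Pmax Pw" "i \<in> {1,2}" "l \<in> {1..L}"
  shows "\<sigma>2 + Pw (other i) (l - 1) * g (other i) i l > 0"
proof -
  have "other i \<in> {1,2}" using assms(2) by auto
  from gain_pos[OF this assms(2,3)] show ?thesis
    using feasible_nonneg[OF assms(1)] noise_pos by (simp add: add_pos_nonneg)
qed

lemma sinr_nonneg:
  assumes "feasible L Pmax Pw" "i \<in> {1,2}" "l \<in> {1..L}"
  shows "0 \<le> sinr g \<sigma>2 Pw i l"
  unfolding sinr_def
  using sinr_denominator_pos[OF assms] feasible_nonneg[OF assms(1)] gain_pos[OF assms(2,2,3)]
  by simp

lemma e2e_sinr_le_sinr: "l \<in> {1..L} \<Longrightarrow> e2e_sinr L g \<sigma>2 Pw i \<le> sinr g \<sigma>2 Pw i l"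
  unfolding e2e_sinr_def by (intro Min_le) auto

lemma e2e_sinr_nonneg:
  assumes "feasible L Pmax Pw" "i \<in> {1,2}"
  shows "0 \<le> e2e_sinr L g \<sigma>2 Pw i"
  unfolding e2e_sinr_def using hops sinr_nonneg[OF assms] by (subst Min_ge_iff) auto

lemma continuous_on_sinr:
  assumes "i \<in> {1,2}" "l \<in> {1..L}"
  shows "continuous_on feasible_set (\<lambda>Pw. sinr g \<sigma>2 Pw i l)"
  unfolding sinr_def
  using sinr_denominator_pos[OF _ assms]
  by (intro continuous_intros continuous_on_coordinate2) force

lemma continuous_on_sum_rate: "continuous_on feasible_set (sum_rate L g \<sigma>2)"
proof -
  have cont: "continuous_on feasible_set (\<lambda>Pw. e2e_sinr L g \<sigma>2 Pw i)" if "i \<in> {1,2}" for i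
    unfolding e2e_sinr_def using hops continuous_on_sinr[OF that]
    by (intro continuous_on_Min_image) auto
  have pos: "\<forall>Pw\<in>feasible_set. 0 < 1 + e2e_sinr L g \<sigma>2 Pw i" if "i \<in> {1,2}" for i
    using e2e_sinr_nonneg that by (simp add: add_pos_nonneg)
  show ?thesis
    unfolding sum_rate_eq using cont[of 1] cont[of 2] pos[of 1] pos[of 2]
    by (intro continuous_intros) auto
qed

lemma sum_rate_maximiser_exists:
  "\<exists>P0. feasible L Pmax P0 \<and> (\<forall>Pw. feasible L Pmax Pw \<longrightarrow> sum_rate L g \<sigma>2 Pw \<le> sum_rate L g \<sigma>2 P0)"
proof -
  have "feasible L Pmax (\<lambda>_ _. 0)"
    unfolding feasible_def using Pmax_nonneg by auto
  then have "feasible_set \<noteq> {}" by blast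
  from continuous_attains_sup[OF compact_feasible this continuous_on_sum_rate]
  show ?thesis by auto
qed

lemma hop_equalisation:
  assumes P0: "feasible L Pmax P0" and l: "l \<in> {1..L}"
  shows "\<exists>p1 p2. 0 \<le> p1 \<and> p1 \<le> Pmax \<and> 0 \<le> p2 \<and> p2 \<le> Pmax \<and>
           p1 * g 1 1 l / (\<sigma>2 + p2 * g 2 1 l) = e2e_sinr L g \<sigma>2 P0 1 \<and>
           p2 * g 2 2 l / (\<sigma>2 + p1 * g 1 2 l) = e2e_sinr L g \<sigma>2 P0 2"
proof -
  have "\<exists>p1 p2. 0 \<le> p1 \<and> p1 \<le> P0 1 (l - 1) \<and> 0 \<le> p2 \<and> p2 \<le> P0 2 (l - 1) \<and>
           p1 * g 1 1 l / (\<sigma>2 + p2 * g 2 1 l) = e2e_sinr L g \<sigma>2 P0 1 \<and>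
           p2 * g 2 2 l / (\<sigma>2 + p1 * g 1 2 l) = e2e_sinr L g \<sigma>2 P0 2"
    using e2e_sinr_le_sinr[OF l, of P0 1] e2e_sinr_le_sinr[OF l, of P0 2]
      e2e_sinr_nonneg[OF P0] gain_pos[OF _ _ l] noise_pos feasible_nonneg[OF P0]
    by (intro two_link_sinr_targets_attainable) (auto simp: sinr_def)
  then show ?thesis
    using feasible_le[OF P0 Pmax_nonneg] by (meson order_trans)
qed

lemma equalised_allocation_exists:
  assumes P0: "feasible L Pmax P0"
  shows "\<exists>Ps. feasible L Pmax Ps \<and>
           (\<forall>i\<in>{1,2}. \<forall>l\<in>{1..L}. sinr g \<sigma>2 Ps i l = e2e_sinr L g \<sigma>2 P0 i)"
proof -
  obtain p1 p2 where p: "\<And>l. l \<in> {1..L} \<Longrightarrow>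
      0 \<le> p1 l \<and> p1 l \<le> Pmax \<and> 0 \<le> p2 l \<and> p2 l \<le> Pmax \<and>
      p1 l * g 1 1 l / (\<sigma>2 + p2 l * g 2 1 l) = e2e_sinr L g \<sigma>2 P0 1 \<and>
      p2 l * g 2 2 l / (\<sigma>2 + p1 l * g 1 2 l) = e2e_sinr L g \<sigma>2 P0 2"
    using hop_equalisation[OF P0] by metis
  \<comment> \<open>hop l is served by the transmit powers with index l - 1\<close>
  define Ps :: "nat \<Rightarrow> nat \<Rightarrow> real" where "Ps i m = (if m < L then if i = 1 then p1 (Suc m)
                               else if i = 2 then p2 (Suc m) else 0 else 0)" for i m
  have "feasible L Pmax Ps"
    unfolding feasible_def Ps_def using p by auto
  moreover have "sinr g \<sigma>2 Ps i l = e2e_sinr L g \<sigma>2 P0 i" if "i \<in> {1,2}" "l \<in> {1..L}" for i l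
  proof -
    have "l - 1 < L" "Suc (l - 1) = l" using that(2) by auto
    then show ?thesis using p[OF that(2)] that(1) unfolding sinr_def Ps_def by auto
  qed
  ultimately show ?thesis by blast
qed

end

theorem lemma1:
  fixes L :: nat and Pmax \<sigma>2 :: real and g :: "nat \<Rightarrow> nat \<Rightarrow> nat \<Rightarrow> real"
  assumes "L \<ge> 2" and "Pmax > 0" and "\<sigma>2 > 0"
    and "\<And>j i l. j \<in> {1,2} \<Longrightarrow> i \<in> {1,2} \<Longrightarrow> l \<in> {1..L} \<Longrightarrow> g j i l > 0"
  shows "\<exists>Pstar. feasible L Pmax Pstar \<and>
           (\<forall>Pw. feasible L Pmax Pw \<longrightarrow> sum_rate L g \<sigma>2 Pw \<le> sum_rate L g \<sigma>2 Pstar) \<and>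
           (\<forall>i\<in>{1,2}. \<forall>l\<in>{1..L}. sinr g \<sigma>2 Pstar i l = sinr g \<sigma>2 Pstar i 1)"
proof -
  interpret two_user_relay L Pmax \<sigma>2 g
    using assms by unfold_locales auto
  obtain P0 where P0: "feasible L Pmax P0"
    and max: "\<And>Pw. feasible L Pmax Pw \<Longrightarrow> sum_rate L g \<sigma>2 Pw \<le> sum_rate L g \<sigma>2 P0"
    using sum_rate_maximiser_exists by blast
  obtain Ps where Ps: "feasible L Pmax Ps"
    and eq: "\<And>i l. i \<in> {1,2} \<Longrightarrow> l \<in> {1..L} \<Longrightarrow> sinr g \<sigma>2 Ps i l = e2e_sinr L g \<sigma>2 P0 i"
    using equalised_allocation_exists[OF P0] by blast
  have "e2e_sinr L g \<sigma>2 Ps i = e2e_sinr L g \<sigma>2 P0 i" if "i \<in> {1,2}" for i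
    using e2e_sinr_eq_const[OF hops eq[OF that]] .
  then have "sum_rate L g \<sigma>2 Ps = sum_rate L g \<sigma>2 P0"
    by (simp add: sum_rate_eq)
  moreover have "\<forall>i\<in>{1,2}. \<forall>l\<in>{1..L}. sinr g \<sigma>2 Ps i l = sinr g \<sigma>2 Ps i 1"
    using eq hops by simp
  ultimately show ?thesis
    using Ps max by auto
qed

end
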